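(* Let $X$ be a nonempty compact Hausdorff space and $T\in M(X,X)$. Then there exists a nonempty subset $A\subset X$ with $T(A)=A$.
   Context: A continuous multivalued map $X\to Y$ is a subset $T\subset X\times Y$ such that the restriction of the projection $X\times Y\to X$ to $T$ is proper (universally closed; equivalently closed with compact fibers), surjective and has finite fibers; $M(X,Y)$ is the set of these. For $A\subset X$, $T(A)$ denotes the image of $T\cap(A\times X)$ under the projection to the second factor; a subset $A$ with $T(A)=A$ is called a fixed subset. *)

theory Defs
  imports "HOL-Analysis.Analysis"
begin

definition cmv_maps :: "'a topology \<Rightarrow> 'b topology \<Rightarrow> ('a \<times> 'b) set set" where
  "cmv_maps X Y = {T. T \<subseteq> topspace X \<times> topspace Y
      \<and> proper_map (subtopology (prod_topology X Y) T) X fst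
      \<and> fst ` T = topspace X
      \<and> (\<forall>x \<in> topspace X. finite {y. (x, y) \<in> T})}"

definition mv_image :: "('a \<times> 'b) set \<Rightarrow> 'a set \<Rightarrow> 'b set" where
  "mv_image T A = snd ` (T \<inter> (A \<times> UNIV))"

end

theory Submission
  imports Defs
begin

text \<open>Iterate T starting from the whole space: the iterates form a decreasing sequence of
nonempty closed sets, so by compactness their intersection A is nonempty. Since the graph
of T is compact, taking images commutes with decreasing intersections of closed sets
(the fibres of T over a point form a nest of nonempty compact sets), hence
T(A) is the intersection of the iterates from the first one on, which is A again.\<close>

lemma mv_image_mono: "A \<subseteq> B \<Longrightarrow> mv_image T A \<subseteq> mv_image T B"
  by (auto simp: mv_image_def)

lemma mv_image_subset: "T \<subseteq> U \<times> V \<Longrightarrow> mv_image T A \<subseteq> V"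
  by (auto simp: mv_image_def)

lemma mv_image_eq_empty_iff: "mv_image T A = {} \<longleftrightarrow> A \<inter> fst ` T = {}"
  by (force simp: mv_image_def)

lemma compactin_cmv_map:
  assumes "compact_space X" and "T \<in> cmv_maps X Y"
  shows "compactin (prod_topology X Y) T"
proof -
  have sub: "T \<subseteq> topspace X \<times> topspace Y"
    and proper: "proper_map (subtopology (prod_topology X Y) T) X fst"
    and onto: "fst ` T = topspace X"
    using assms(2) by (auto simp: cmv_maps_def)
  have "topspace (subtopology (prod_topology X Y) T) = T"
    using sub by auto
  then have "compact_space (subtopology (prod_topology X Y) T)"
    using compact_space_proper_map_preimage[OF proper] onto assms(1) by auto
  then show ?thesis
    using sub by (simp add: compactin_subspace)
qed

lemma closedin_mv_image:
  assumes T: "compactin (prod_topology X Y) T" and "Hausdorff_space Y" and "closedin X C"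
  shows "closedin Y (mv_image T C)"
proof -
  have "compactin (prod_topology X Y) (T \<inter> (C \<times> topspace Y))"
    using assms by (intro compact_Int_closedin) (auto simp: closedin_prod_Times_iff)
  then have "compactin Y (snd ` (T \<inter> (C \<times> topspace Y)))"
    by (rule image_compactin[OF _ continuous_map_snd])
  moreover have "snd ` (T \<inter> (C \<times> topspace Y)) = mv_image T C"
    using compactin_subset_topspace[OF T] by (auto simp: mv_image_def)
  ultimately show ?thesis
    using compactin_imp_closedin \<open>Hausdorff_space Y\<close> by metis
qed

lemma mv_image_Inter_decseq:
  assumes T: "compactin (prod_topology X Y) T"
    and "Hausdorff_space X" and "t1_space Y"
    and closed: "\<And>n. closedin X (S n)" and "decseq S"
  shows "mv_image T (\<Inter>n. S n) = (\<Inter>n. mv_image T (S n))"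
proof
  show "mv_image T (\<Inter>n. S n) \<subseteq> (\<Inter>n. mv_image T (S n))"
    by (auto simp: mv_image_def)
next
  show "(\<Inter>n. mv_image T (S n)) \<subseteq> mv_image T (\<Inter>n. S n)"
  proof
    fix y assume y: "y \<in> (\<Inter>n. mv_image T (S n))"
    then have "y \<in> topspace Y"
      using compactin_subset_topspace[OF T] mv_image_subset[of T "topspace X" "topspace Y"]
      by auto
    define K where "K n = fst ` (T \<inter> (S n \<times> {y}))" for n
    have "compactin X (K n)" for n
      unfolding K_def using T closed \<open>t1_space Y\<close> \<open>y \<in> topspace Y\<close>
      by (intro image_compactin[where X = "prod_topology X Y"] compact_Int_closedin)
        (auto simp: closedin_prod_Times_iff closedin_t1_singleton continuous_map_fst)
    then have K_closed: "closedin X (K n)" for n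
      using compactin_imp_closedin \<open>Hausdorff_space X\<close> by metis
    have "decseq K"
      using \<open>decseq S\<close> unfolding K_def decseq_def by blast
    then have "K n \<subseteq> K 0" for n
      by (simp add: decseq_def)
    moreover have "compact_space (subtopology X (K 0))"
      using \<open>compactin X (K 0)\<close> compactin_subspace by blast
    moreover have "K n \<noteq> {}" for n
      using y unfolding K_def mv_image_def by force
    ultimately obtain x where "x \<in> (\<Inter>n. K n)"
      using compact_space_imp_nest[of "subtopology X (K 0)" K] K_closed \<open>decseq K\<close>
      by (meson closedin_subset_topspace ex_in_conv)
    then show "y \<in> mv_image T (\<Inter>n. S n)"
      unfolding K_def mv_image_def by force
  qed
qed

lemma decseq_mv_image_iterates:
  assumes "T \<subseteq> U \<times> U"
  shows "decseq (\<lambda>n. (mv_image T ^^ n) U)"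
proof (rule decseq_SucI)
  show "(mv_image T ^^ Suc n) U \<subseteq> (mv_image T ^^ n) U" for n
    by (induction n) (simp_all add: mv_image_subset[OF assms] mv_image_mono)
qed

lemma closedin_mv_image_iterates:
  assumes "compactin (prod_topology X X) T" and "Hausdorff_space X"
  shows "closedin X ((mv_image T ^^ n) (topspace X))"
  by (induction n) (use assms closedin_mv_image in auto)

lemma mv_image_iterates_nonempty:
  assumes "T \<subseteq> U \<times> U" and "fst ` T = U" and "U \<noteq> {}"
  shows "(mv_image T ^^ n) U \<noteq> {}"
proof (induction n)
  case (Suc n)
  have "(mv_image T ^^ n) U \<subseteq> U"
    by (cases n) (simp_all add: mv_image_subset[OF assms(1)])
  with Suc show ?case
    using assms(2) by (auto simp: mv_image_eq_empty_iff)
qed (use assms in simp)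

theorem mainTheorem14:
  fixes X :: "'a topology" and T :: "('a \<times> 'a) set"
  assumes "topspace X \<noteq> {}"
    and "compact_space X"
    and "Hausdorff_space X"
    and "T \<in> cmv_maps X X"
  shows "\<exists>A. A \<subseteq> topspace X \<and> A \<noteq> {} \<and> mv_image T A = A"
proof -
  have T: "compactin (prod_topology X X) T"
    using compactin_cmv_map assms(2,4) by blast
  have sub: "T \<subseteq> topspace X \<times> topspace X" and onto: "fst ` T = topspace X"
    using assms(4) by (auto simp: cmv_maps_def)
  define S where "S n = (mv_image T ^^ n) (topspace X)" for n
  have closed: "closedin X (S n)" for n
    unfolding S_def using closedin_mv_image_iterates T assms(3) .
  have dec: "decseq S"
    unfolding S_def using decseq_mv_image_iterates sub .
  have S_Suc: "S (Suc n) = mv_image T (S n)" for n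
    by (simp add: S_def)
  have nonempty: "(\<Inter>n. S n) \<noteq> {}"
    using compact_space_imp_nest[OF assms(2) closed _ dec] mv_image_iterates_nonempty sub onto assms(1)
    unfolding S_def by blast
  have "mv_image T (\<Inter>n. S n) = (\<Inter>n. S (Suc n))"
    using mv_image_Inter_decseq[OF T assms(3) Hausdorff_imp_t1_space[OF assms(3)] closed dec]
    by (simp add: S_Suc)
  also have "\<dots> = (\<Inter>n. S n)"
    using dec by (auto simp: decseq_Suc_iff)
  finally have "mv_image T (\<Inter>n. S n) = (\<Inter>n. S n)" .
  moreover have "(\<Inter>n. S n) \<subseteq> topspace X"
    using INT_lower[of 0 UNIV S] by (simp add: S_def)
  ultimately show ?thesis
    using nonempty by blast
qed

end
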